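(* Let $\mathcal{X},\mathcal{Y}$ be Polish spaces, let $\mathcal{S}=\{p_1,\ldots,p_{|\mathcal{S}|}\}$ be a finite set of probability measures on $\mathcal{X}$, let $\mathcal{H}=\{h_i\}_{i=1}^M$ be a finite set of real-valued functions on the space $\mathcal{M}_1(\mathcal{X}\times\mathcal{Y})$ of joint distributions, and let $\theta\in\mathbb{R}^M$ be the associated constraint levels. Then a rate $R$ is robust one-shot achievable only if $R\ge\bar{R}(\theta)$.
   Context: A conditional distribution $Q_{Y|X}$ is a stochastic kernel from $\mathcal{X}$ to $\mathcal{Y}$; for $\mu_X\in\mathcal{M}_1(\mathcal{X})$, $\mu_XQ_{Y|X}$ denotes the induced joint law and $I(\mu_X,Q_{Y|X})$ its mutual information. The set $\mathcal{L}(\theta)$ consists of all conditional distributions $Q_{Y|X}$ such that $h_i[\mu_XQ_{Y|X}]\le\theta_i$ for all $\mu_X\in\mathcal{S}$ and all $i\in\{1,\ldots,M\}$. The robust information rate function is $\bar{R}(\theta)=\inf_{Q_{Y|X}\in\mathcal{L}(\theta)}\sup_{\mu_X\in\mathcal{S}}I(\mu_X,Q_{Y|X})$. A rate $R$ is robust one-shot achievable if there exist an encoder $f:\mathcal{X}\times\mathcal{Z}\to\mathbb{N}_0$, a decoder $g:\mathbb{N}_0\times\mathcal{Z}\to\mathcal{Y}$ and a random variable $Z$ valued in a set $\mathcal{Z}$ (common randomness, independent of the source) such that for every $\mu_X\in\mathcal{S}$, with $X\sim\mu_X$, $M=f(X,Z)$ and $Y=g(M,Z)$, one has $H(M\mid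 Z)\le R$ and the induced joint distribution $P_{X,Y}$ satisfies $h_i(P_{X,Y})\le\theta_i$ for all $i$. *)

theory Defs
  imports "HOL-Probability.Probability"
begin

definition prob_on :: "'a::topological_space measure \<Rightarrow> bool" where
  "prob_on \<mu> \<longleftrightarrow> sets \<mu> = sets borel \<and> prob_space \<mu>"

definition stoch_kernel :: "('a::topological_space \<Rightarrow> 'b::topological_space measure) \<Rightarrow> bool" where
  "stoch_kernel K \<longleftrightarrow> K \<in> borel \<rightarrow>\<^sub>M prob_algebra borel"

definition joint_law ::
  "'a::topological_space measure \<Rightarrow> ('a \<Rightarrow> 'b::topological_space measure) \<Rightarrow> ('a \<times> 'b) measure" where
  "joint_law \<mu> K = \<mu> \<bind> (\<lambda>x. distr (K x) (borel \<Otimes>\<^sub>M borel) (\<lambda>y. (x, y)))"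

text \<open>For probability
  measures, int (t ln t) dQ = int (t ln t - t + 1) dQ with t = dP/dQ, the latter
  integrand being nonnegative.\<close>
definition KL_div :: "'a measure \<Rightarrow> 'a measure \<Rightarrow> ereal" where
  "KL_div P Q =
    (if absolutely_continuous Q P
     then enn2ereal (\<integral>\<^sup>+ x. ennreal (let t = enn2real (RN_deriv Q P x) in t * ln t - t + 1) \<partial>Q)
     else \<infinity>)"

definition mutual_info ::
  "'a::topological_space measure \<Rightarrow> ('a \<Rightarrow> 'b::topological_space measure) \<Rightarrow> ereal" where
  "mutual_info \<mu> K =
     KL_div (joint_law \<mu> K) (\<mu> \<Otimes>\<^sub>M distr (joint_law \<mu> K) borel snd)"

definition constr_set ::
  "'a::topological_space measure set \<Rightarrow> nat \<Rightarrow> (nat \<Rightarrow> ('a \<times> 'b::topological_space) measure \<Rightarrow> real)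
    \<Rightarrow> (nat \<Rightarrow> real) \<Rightarrow> ('a \<Rightarrow> 'b measure) set" where
  "constr_set S M h \<theta> =
     {K. stoch_kernel K \<and> (\<forall>\<mu>\<in>S. \<forall>i<M. h i (joint_law \<mu> K) \<le> \<theta> i)}"

definition robust_rate ::
  "'a::topological_space measure set \<Rightarrow> nat \<Rightarrow> (nat \<Rightarrow> ('a \<times> 'b::topological_space) measure \<Rightarrow> real)
    \<Rightarrow> (nat \<Rightarrow> real) \<Rightarrow> ereal" where
  "robust_rate S M h \<theta> =
     (INF K \<in> (constr_set S M h \<theta> :: ('a \<Rightarrow> 'b measure) set). SUP \<mu>\<in>S. mutual_info \<mu> K)"

definition disc_entropy :: "nat measure \<Rightarrow> ennreal" where
  "disc_entropy P = (\<Sum>m. ennreal (- measure P {m} * ln (measure P {m})))"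

text \<open>H(M | Z) for M = f(X,Z) with X ~ mu independent of Z ~ PZ: the conditional law of M
  given Z = z is the law of f(X,z).\<close>
definition cond_entropy_code ::
  "'a measure \<Rightarrow> 'z measure \<Rightarrow> ('a \<Rightarrow> 'z \<Rightarrow> nat) \<Rightarrow> ennreal" where
  "cond_entropy_code \<mu> PZ f =
     (\<integral>\<^sup>+ z. disc_entropy (distr \<mu> (count_space UNIV) (\<lambda>x. f x z)) \<partial>PZ)"

definition code_joint ::
  "'a::topological_space measure \<Rightarrow> 'z measure \<Rightarrow> ('a \<Rightarrow> 'z \<Rightarrow> nat) \<Rightarrow> (nat \<Rightarrow> 'z \<Rightarrow> 'b::topological_space)
    \<Rightarrow> ('a \<times> 'b) measure" where
  "code_joint \<mu> PZ f g =
     distr (\<mu> \<Otimes>\<^sub>M PZ) (borel \<Otimes>\<^sub>M borel) (\<lambda>(x, z). (x, g (f x z) z))"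

text \<open>Robust one-shot achievability of rate R, witnessed by the common randomness
  distribution PZ (on an arbitrary measurable space), encoder f and decoder g.\<close>
definition robust_achievable_via ::
  "'a::topological_space measure set \<Rightarrow> nat \<Rightarrow> (nat \<Rightarrow> ('a \<times> 'b::topological_space) measure \<Rightarrow> real)
    \<Rightarrow> (nat \<Rightarrow> real) \<Rightarrow> real \<Rightarrow> 'z measure \<Rightarrow> ('a \<Rightarrow> 'z \<Rightarrow> nat) \<Rightarrow> (nat \<Rightarrow> 'z \<Rightarrow> 'b) \<Rightarrow> bool" where
  "robust_achievable_via S M h \<theta> R PZ f g \<longleftrightarrow>
     prob_space PZ \<and>
     (\<lambda>(x, z). f x z) \<in> (borel \<Otimes>\<^sub>M PZ) \<rightarrow>\<^sub>M count_space UNIV \<and>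
     (\<lambda>(m, z). g m z) \<in> (count_space UNIV \<Otimes>\<^sub>M PZ) \<rightarrow>\<^sub>M borel \<and>
     (\<forall>\<mu>\<in>S. enn2ereal (cond_entropy_code \<mu> PZ f) \<le> ereal R \<and>
             (\<forall>i<M. h i (code_joint \<mu> PZ f g) \<le> \<theta> i))"

end

theory Submission
  imports Defs
begin

text \<open>A code \<open>(PZ, f, g)\<close> induces the kernel \<open>x \<mapsto> law of g (f x Z) Z\<close>, whose joint law
  with any source \<open>\<mu>\<close> is the joint law produced by the code; so this kernel meets all
  constraints, and it remains to bound its mutual information by \<open>H(M | Z)\<close>.  Take the source
  sample \<open>x'\<close> together with an independent copy \<open>(x, z)\<close> of \<open>(X, Z)\<close>, and reweight the product
  law by \<open>s = [f x' z = f x z] / P(f X z = f x z)\<close>.  Then \<open>(x', x, z) \<mapsto> (x', g (f x z) z)\<close> maps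
  the reweighted law to the joint law of \<open>(X, Y)\<close> and the product law to \<open>\<mu> \<otimes> P\<^sub>Y\<close>.  By the
  data processing inequality, \<open>I(X; Y) \<le> \<integral> \<phi>(s)\<close> with \<open>\<phi>(t) = t ln t - t + 1\<close>, and this
  integral is exactly \<open>H(M | Z)\<close>.  The data processing inequality itself is conditional Jensen
  for \<open>\<phi>\<close>, proved with tangent lines of \<open>\<phi>\<close> at points clipped to \<open>[1/n, n]\<close> and Fatou's
  lemma.\<close>

section \<open>Tangent lines of the KL integrand\<close>

definition kl_phi :: "real \<Rightarrow> real" where
  "kl_phi t = t * ln t - t + 1"

definition kl_tangent :: "real \<Rightarrow> real \<Rightarrow> real" where
  "kl_tangent c t = kl_phi c + ln c * (t - c)"

definition clip :: "real \<Rightarrow> real \<Rightarrow> real" where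
  "clip n t = min (max t (1 / n)) n"

lemma kl_phi_borel [measurable]: "kl_phi \<in> borel_measurable borel"
  unfolding kl_phi_def by measurable

lemma kl_tangent_le_kl_phi:
  assumes "0 \<le> t" and "0 < c"
  shows "kl_tangent c t \<le> kl_phi t"
proof (cases "t = 0")
  case True
  then show ?thesis using \<open>0 < c\<close> by (simp add: kl_tangent_def kl_phi_def)
next
  case False
  with \<open>0 \<le> t\<close> have t: "0 < t" by simp
  have "ln (c / t) \<le> c / t - 1"
    using t \<open>0 < c\<close> by (intro ln_le_minus_one) simp
  then have "t * (ln c - ln t) \<le> t * (c / t - 1)"
    using t \<open>0 < c\<close> by (intro mult_left_mono) (simp_all add: ln_div)
  then show ?thesis
    using t by (simp add: kl_tangent_def kl_phi_def algebra_simps)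
qed

lemma kl_phi_nonneg: "0 \<le> t \<Longrightarrow> 0 \<le> kl_phi t"
  using kl_tangent_le_kl_phi[of t 1] by (simp add: kl_tangent_def kl_phi_def)

lemma kl_phi_inverse: "0 < p \<Longrightarrow> p * kl_phi (1 / p) + (1 - p) = - ln p"
  by (simp add: kl_phi_def ln_div field_simps)

text \<open>Adding \<open>B\<close> to the slope \<open>ln c\<close> and balancing with \<open>B * t\<close>, \<open>B * s\<close> leaves the
  tangent inequality unchanged but makes every term nonnegative once \<open>B \<ge> \<bar>ln c\<bar>\<close>, so that it
  can be integrated in \<open>ennreal\<close>.\<close>

lemma kl_tangent_balanced_le:
  assumes "0 \<le> s" and "0 < c"
  shows "kl_tangent c t + ((ln c + B) * s + B * t) \<le> kl_phi s + ((ln c + B) * t + B * s)"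
  using kl_tangent_le_kl_phi[OF assms] by (simp add: kl_tangent_def algebra_simps)

lemma clip_bounds:
  assumes "1 \<le> n"
  shows "0 < clip n t" and "1 / n \<le> clip n t" and "clip n t \<le> n"
proof -
  have "1 / n \<le> n" using assms order.trans[of "1 / n" 1 n] by simp
  then show "1 / n \<le> clip n t" and "clip n t \<le> n" by (auto simp: clip_def)
  then show "0 < clip n t" using assms by (smt (verit) divide_pos_pos)
qed

lemma clip_below:
  assumes "1 \<le> n" and "t \<le> 1 / n"
  shows "clip n t = 1 / n"
proof -
  have "1 / n \<le> n" using clip_bounds(2,3)[OF assms(1)] by (rule order.trans)
  then show ?thesis using assms(2) by (simp add: clip_def max_def min_def)
qed

lemma abs_ln_clip_le:
  assumes "1 \<le> n"
  shows "\<bar>ln (clip n t)\<bar> \<le> ln n"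
proof -
  have "ln (1 / n) \<le> ln (clip n t)" and "ln (clip n t) \<le> ln n"
    using clip_bounds[OF assms] assms by simp_all
  then show ?thesis using assms by (simp add: ln_div)
qed

lemma kl_tangent_clip_nonneg:
  assumes "0 \<le> t" and "1 \<le> n"
  shows "0 \<le> kl_tangent (clip n t) t"
proof -
  have "0 \<le> ln (clip n t) * (t - clip n t)"
  proof (cases "t < 1 / n")
    case True
    then have "clip n t = 1 / n" using assms by (simp add: clip_below)
    then show ?thesis using True assms by (simp add: mult_nonpos_nonpos)
  next
    case False
    then show ?thesis using assms by (cases "t \<le> n") (simp_all add: clip_def)
  qed
  moreover have "0 \<le> kl_phi (clip n t)"
    using clip_bounds(1)[OF assms(2)] by (intro kl_phi_nonneg less_imp_le)
  ultimately show ?thesis by (simp add: kl_tangent_def)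
qed

lemma kl_tangent_clip_tendsto:
  assumes "0 \<le> t"
  shows "(\<lambda>k. kl_tangent (clip (Suc k) t) t) \<longlonglongrightarrow> kl_phi t"
proof (cases "t = 0")
  case True
  have "(\<lambda>k. 1 - 1 / real (Suc k)) \<longlonglongrightarrow> 1 - 0"
    by (intro tendsto_diff tendsto_const LIMSEQ_inverse_real_of_nat[unfolded inverse_eq_divide])
  moreover have "kl_tangent (clip (Suc k) 0) 0 = 1 - 1 / real (Suc k)" for k
    by (simp add: clip_below kl_tangent_def kl_phi_def)
  ultimately show ?thesis using True by (simp add: kl_phi_def)
next
  case False
  with assms have t: "0 < t" by simp
  have "eventually (\<lambda>k. kl_tangent (clip (Suc k) t) t = kl_phi t) sequentially"
  proof (rule eventually_sequentiallyI)
    fix k assume "nat \<lceil>max t (1 / t)\<rceil> \<le> k"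
    then have "t \<le> Suc k" and "1 / t \<le> Suc k" by linarith+
    then have "clip (Suc k) t = t"
      using t by (simp add: clip_def field_simps)
    then show "kl_tangent (clip (Suc k) t) t = kl_phi t" by (simp add: kl_tangent_def)
  qed
  then show ?thesis by (rule tendsto_eventually)
qed

section \<open>Data processing for the KL divergence\<close>

lemma nn_integral_mono_cancel:
  assumes "\<And>x. x \<in> space M \<Longrightarrow> f x + g x \<le> h x + k x"
    and "(\<integral>\<^sup>+x. g x \<partial>M) = (\<integral>\<^sup>+x. k x \<partial>M)" and "(\<integral>\<^sup>+x. g x \<partial>M) < \<infinity>"
    and [measurable]: "f \<in> borel_measurable M" "g \<in> borel_measurable M"
      "h \<in> borel_measurable M" "k \<in> borel_measurable M"
  shows "(\<integral>\<^sup>+x. f x \<partial>M) \<le> (\<integral>\<^sup>+x. h x \<partial>M)"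
proof -
  have "(\<integral>\<^sup>+x. g x \<partial>M) + (\<integral>\<^sup>+x. f x \<partial>M) = (\<integral>\<^sup>+x. f x + g x \<partial>M)"
    by (simp add: nn_integral_add add.commute)
  also have "\<dots> \<le> (\<integral>\<^sup>+x. h x + k x \<partial>M)"
    using assms(1) by (rule nn_integral_mono)
  also have "\<dots> = (\<integral>\<^sup>+x. g x \<partial>M) + (\<integral>\<^sup>+x. h x \<partial>M)"
    using assms(2) by (simp add: nn_integral_add add.commute)
  finally show ?thesis
    using assms(3) by (auto simp: ennreal_add_left_cancel_le)
qed

locale cond_exp_density =
  fixes Q :: "'w measure" and N :: "'v measure" and T :: "'w \<Rightarrow> 'v"
    and s :: "'w \<Rightarrow> real" and r :: "'v \<Rightarrow> real"
  assumes T_measurable [measurable]: "T \<in> Q \<rightarrow>\<^sub>M N"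
    and r_measurable [measurable]: "r \<in> borel_measurable N"
    and r_nonneg: "\<And>y. 0 \<le> r y"
    and s_measurable [measurable]: "s \<in> borel_measurable Q"
    and s_nonneg: "\<And>\<omega>. \<omega> \<in> space Q \<Longrightarrow> 0 \<le> s \<omega>"
    and s_finite: "(\<integral>\<^sup>+\<omega>. s \<omega> \<partial>Q) \<noteq> \<infinity>"
    and cond_exp: "\<And>w :: 'v \<Rightarrow> ennreal. w \<in> borel_measurable N \<Longrightarrow>
      (\<integral>\<^sup>+\<omega>. w (T \<omega>) * s \<omega> \<partial>Q) = (\<integral>\<^sup>+\<omega>. w (T \<omega>) * r (T \<omega>) \<partial>Q)"
begin

lemma nn_integral_kl_tangent_clip_le:
  assumes n: "1 \<le> n"
  shows "(\<integral>\<^sup>+\<omega>. kl_tangent (clip n (r (T \<omega>))) (r (T \<omega>)) \<partial>Q) \<le> (\<integral>\<^sup>+\<omega>. kl_phi (s \<omega>) \<partial>Q)"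
proof -
  define B where "B = ln n"
  define v where "v y = ln (clip n (r y)) + B" for y
  have v_bounds: "0 \<le> v y" "v y \<le> 2 * B" for y
    using abs_ln_clip_le[OF n, of "r y"] by (auto simp: v_def B_def)
  have B: "0 \<le> B" using n by (simp add: B_def)
  have [measurable]: "v \<in> borel_measurable N" unfolding v_def clip_def by measurable
  define L where "L \<omega> = kl_tangent (clip n (r (T \<omega>))) (r (T \<omega>))" for \<omega>
  have [measurable]: "L \<in> borel_measurable Q" unfolding L_def kl_tangent_def clip_def by measurable
  have L_nonneg: "0 \<le> L \<omega>" for \<omega>
    using kl_tangent_clip_nonneg[OF r_nonneg n] by (simp add: L_def)
  have pointwise: "ennreal (L \<omega>) + (ennreal (v (T \<omega>)) * s \<omega> + ennreal B * r (T \<omega>))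
      \<le> ennreal (kl_phi (s \<omega>)) + (ennreal (v (T \<omega>)) * r (T \<omega>) + ennreal B * s \<omega>)"
    if \<omega>: "\<omega> \<in> space Q" for \<omega>
  proof -
    have "ennreal (L \<omega> + (v (T \<omega>) * s \<omega> + B * r (T \<omega>)))
        \<le> ennreal (kl_phi (s \<omega>) + (v (T \<omega>) * r (T \<omega>) + B * s \<omega>))"
      using kl_tangent_balanced_le[OF s_nonneg[OF \<omega>] clip_bounds(1)[OF n]]
      by (intro ennreal_leI) (simp add: L_def v_def)
    then show ?thesis
      using L_nonneg v_bounds(1) B s_nonneg[OF \<omega>] r_nonneg kl_phi_nonneg[OF s_nonneg[OF \<omega>]]
      by (simp add: ennreal_mult ennreal_plus)
  qed
  have swap: "(\<integral>\<^sup>+\<omega>. ennreal (v (T \<omega>)) * s \<omega> + ennreal B * r (T \<omega>) \<partial>Q)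
      = (\<integral>\<^sup>+\<omega>. ennreal (v (T \<omega>)) * r (T \<omega>) + ennreal B * s \<omega> \<partial>Q)"
    using cond_exp[of "\<lambda>y. ennreal (v y)"] cond_exp[of "\<lambda>_. ennreal B"]
    by (simp add: nn_integral_add)
  have "(\<integral>\<^sup>+\<omega>. ennreal (v (T \<omega>)) * s \<omega> + ennreal B * r (T \<omega>) \<partial>Q)
      \<le> (\<integral>\<^sup>+\<omega>. ennreal (2 * B) * s \<omega> + ennreal B * r (T \<omega>) \<partial>Q)"
    using v_bounds(2) by (intro nn_integral_mono add_right_mono mult_right_mono ennreal_leI) auto
  also have "\<dots> = ennreal (2 * B) * (\<integral>\<^sup>+\<omega>. s \<omega> \<partial>Q) + ennreal B * (\<integral>\<^sup>+\<omega>. s \<omega> \<partial>Q)"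
    using cond_exp[of "\<lambda>_. 1"] by (simp add: nn_integral_add nn_integral_cmult)
  also have "\<dots> < \<infinity>"
    using s_finite by (simp add: ennreal_mult_less_top less_top)
  finally have finite: "(\<integral>\<^sup>+\<omega>. ennreal (v (T \<omega>)) * s \<omega> + ennreal B * r (T \<omega>) \<partial>Q) < \<infinity>" .
  have "(\<integral>\<^sup>+\<omega>. L \<omega> \<partial>Q) \<le> (\<integral>\<^sup>+\<omega>. kl_phi (s \<omega>) \<partial>Q)"
    by (rule nn_integral_mono_cancel[OF pointwise swap finite]) measurable
  then show ?thesis by (simp add: L_def)
qed

lemma nn_integral_kl_phi_cond_exp_le:
  "(\<integral>\<^sup>+\<omega>. kl_phi (r (T \<omega>)) \<partial>Q) \<le> (\<integral>\<^sup>+\<omega>. kl_phi (s \<omega>) \<partial>Q)"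
proof -
  have "(\<integral>\<^sup>+\<omega>. kl_phi (r (T \<omega>)) \<partial>Q)
      = (\<integral>\<^sup>+\<omega>. liminf (\<lambda>k. ennreal (kl_tangent (clip (Suc k) (r (T \<omega>))) (r (T \<omega>)))) \<partial>Q)"
    by (intro nn_integral_cong lim_imp_Liminf[symmetric] tendsto_ennrealI
        kl_tangent_clip_tendsto r_nonneg) simp
  also have "\<dots> \<le> liminf (\<lambda>k. \<integral>\<^sup>+\<omega>. kl_tangent (clip (Suc k) (r (T \<omega>))) (r (T \<omega>)) \<partial>Q)"
    by (rule nn_integral_liminf) (simp add: kl_tangent_def clip_def)
  also have "\<dots> \<le> (\<integral>\<^sup>+\<omega>. kl_phi (s \<omega>) \<partial>Q)"
    using nn_integral_kl_tangent_clip_le by (intro Liminf_le) auto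
  finally show ?thesis .
qed

end

lemma absolutely_continuous_distr_density:
  assumes T [measurable]: "T \<in> M \<rightarrow>\<^sub>M N" and f [measurable]: "f \<in> borel_measurable M"
  shows "absolutely_continuous (distr M N T) (distr (density M f) N T)"
  unfolding absolutely_continuous_def
proof
  fix A assume A: "A \<in> null_sets (distr M N T)"
  then have [measurable]: "A \<in> sets N" by (auto simp: null_sets_def)
  have "T -` A \<inter> space M \<in> null_sets M"
    using A by (auto simp: null_sets_def emeasure_distr)
  then have "AE x in M. x \<in> T -` A \<inter> space M \<longrightarrow> f x = 0"
    by (rule AE_mp[OF AE_not_in]) auto
  then have "T -` A \<inter> space M \<in> null_sets (density M f)"
    by (subst null_sets_density_iff) auto
  then show "A \<in> null_sets (distr (density M f) N T)"
    by (auto simp: null_sets_def emeasure_distr)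
qed

lemma cond_exp_density_RN_deriv:
  fixes Q :: "'w measure" and N :: "'v measure" and s :: "'w \<Rightarrow> real"
  assumes "prob_space Q" and T [measurable]: "T \<in> Q \<rightarrow>\<^sub>M N"
    and s [measurable]: "s \<in> borel_measurable Q" and s_nonneg: "\<And>\<omega>. \<omega> \<in> space Q \<Longrightarrow> 0 \<le> s \<omega>"
    and s_finite: "(\<integral>\<^sup>+\<omega>. s \<omega> \<partial>Q) \<noteq> \<infinity>"
  shows "cond_exp_density Q N T s
    (\<lambda>y. enn2real (RN_deriv (distr Q N T) (distr (density Q (\<lambda>\<omega>. ennreal (s \<omega>))) N T) y))"
proof -
  interpret Q: prob_space Q by fact
  define Q' where "Q' = distr Q N T"
  define P' where "P' = distr (density Q (\<lambda>\<omega>. ennreal (s \<omega>))) N T"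
  interpret Q': prob_space Q' unfolding Q'_def by (rule Q.prob_space_distr) simp
  have sets_Q': "sets Q' = sets N" and sets_P': "sets P' = sets N"
    by (simp_all add: Q'_def P'_def)
  have ac: "absolutely_continuous Q' P'"
    unfolding Q'_def P'_def by (rule absolutely_continuous_distr_density) simp_all
  have "T -` space N \<inter> space Q = space Q" using measurable_space[OF T] by auto
  then have "emeasure P' (space P') = (\<integral>\<^sup>+\<omega>. s \<omega> \<partial>Q)"
    by (simp add: P'_def emeasure_distr emeasure_density)
  then have "finite_measure P'"
    using s_finite by (intro finite_measureI) simp
  define \<rho> where "\<rho> = RN_deriv Q' P'"
  have density_\<rho>: "density Q' \<rho> = P'"
    unfolding \<rho>_def using ac sets_P' sets_Q' by (intro Q'.density_RN_deriv) auto
  have [measurable]: "\<rho> \<in> borel_measurable N"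
    unfolding \<rho>_def by (subst measurable_cong_sets[OF sets_Q'[symmetric] refl]) simp
  have "AE y in Q'. \<rho> y \<noteq> \<infinity>"
    unfolding \<rho>_def using ac sets_P' sets_Q' \<open>finite_measure P'\<close>
    by (intro Q'.RN_deriv_finite) (auto intro: finite_measure.axioms(1))
  then have \<rho>_finite: "AE \<omega> in Q. \<rho> (T \<omega>) = ennreal (enn2real (\<rho> (T \<omega>)))"
    unfolding Q'_def by (subst (asm) AE_distr_iff) (auto simp: less_top)
  show ?thesis
  proof (unfold_locales, unfold \<rho>_def[symmetric] Q'_def[symmetric] P'_def[symmetric])
    fix w :: "'v \<Rightarrow> ennreal" assume [measurable]: "w \<in> borel_measurable N"
    have "(\<integral>\<^sup>+\<omega>. w (T \<omega>) * s \<omega> \<partial>Q) = (\<integral>\<^sup>+y. w y \<partial>P')"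
      by (simp add: P'_def nn_integral_distr nn_integral_density mult.commute)
    also have "\<dots> = (\<integral>\<^sup>+y. \<rho> y * w y \<partial>Q')"
      by (simp add: density_\<rho>[symmetric] nn_integral_density measurable_cong_sets[OF sets_Q' refl])
    also have "\<dots> = (\<integral>\<^sup>+\<omega>. \<rho> (T \<omega>) * w (T \<omega>) \<partial>Q)"
      by (simp add: Q'_def nn_integral_distr)
    also have "\<dots> = (\<integral>\<^sup>+\<omega>. w (T \<omega>) * enn2real (\<rho> (T \<omega>)) \<partial>Q)"
      using \<rho>_finite by (intro nn_integral_cong_AE) (auto simp: mult.commute)
    finally show "(\<integral>\<^sup>+\<omega>. w (T \<omega>) * s \<omega> \<partial>Q) = (\<integral>\<^sup>+\<omega>. w (T \<omega>) * enn2real (\<rho> (T \<omega>)) \<partial>Q)" .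
  qed (use s_nonneg s_finite in simp_all)
qed

theorem KL_div_distr_density_le:
  fixes s :: "'w \<Rightarrow> real"
  assumes "prob_space Q" and T [measurable]: "T \<in> Q \<rightarrow>\<^sub>M N"
    and s [measurable]: "s \<in> borel_measurable Q" and "\<And>\<omega>. \<omega> \<in> space Q \<Longrightarrow> 0 \<le> s \<omega>"
    and "(\<integral>\<^sup>+\<omega>. s \<omega> \<partial>Q) \<noteq> \<infinity>"
  shows "KL_div (distr (density Q (\<lambda>\<omega>. ennreal (s \<omega>))) N T) (distr Q N T)
    \<le> enn2ereal (\<integral>\<^sup>+\<omega>. kl_phi (s \<omega>) \<partial>Q)"
proof -
  define r where
    "r y = enn2real (RN_deriv (distr Q N T) (distr (density Q (\<lambda>\<omega>. ennreal (s \<omega>))) N T) y)" for y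
  interpret cond_exp_density Q N T s r
    unfolding r_def by (rule cond_exp_density_RN_deriv) fact+
  have "KL_div (distr (density Q (\<lambda>\<omega>. ennreal (s \<omega>))) N T) (distr Q N T)
      = enn2ereal (\<integral>\<^sup>+y. kl_phi (r y) \<partial>distr Q N T)"
    using absolutely_continuous_distr_density[OF T, of "\<lambda>\<omega>. ennreal (s \<omega>)"]
    by (simp add: KL_div_def kl_phi_def r_def Let_def)
  also have "(\<integral>\<^sup>+y. kl_phi (r y) \<partial>distr Q N T) = (\<integral>\<^sup>+\<omega>. kl_phi (r (T \<omega>)) \<partial>Q)"
    by (simp add: nn_integral_distr)
  finally show ?thesis
    using nn_integral_kl_phi_cond_exp_le by (simp add: less_eq_ennreal.rep_eq)
qed

section \<open>The kernel induced by a code\<close>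

lemma nn_integral_nat_valued:
  fixes F :: "'a \<Rightarrow> nat"
  assumes F: "F \<in> M \<rightarrow>\<^sub>M count_space UNIV"
  shows "(\<integral>\<^sup>+x. w (F x) \<partial>M) = (\<Sum>m. w m * emeasure M (F -` {m} \<inter> space M))"
proof -
  have cells [measurable]: "F -` {m} \<inter> space M \<in> sets M" for m
    using F by (rule measurable_sets) simp
  have "(\<integral>\<^sup>+x. w (F x) \<partial>M) = (\<integral>\<^sup>+x. (\<Sum>m. w m * indicator (F -` {m} \<inter> space M) x) \<partial>M)"
  proof (intro nn_integral_cong)
    fix x assume "x \<in> space M"
    then have "(\<lambda>m. w m * indicator (F -` {m} \<inter> space M) x) = (\<lambda>m. if m = F x then w (F x) else 0)"
      by (auto simp: indicator_def)
    then show "w (F x) = (\<Sum>m. w m * indicator (F -` {m} \<inter> space M) x)"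
      using sums_single[of "F x" "\<lambda>_. w (F x)"] by (simp add: sums_iff)
  qed
  also have "\<dots> = (\<Sum>m. w m * emeasure M (F -` {m} \<inter> space M))"
    by (simp add: nn_integral_suminf nn_integral_cmult_indicator)
  finally show ?thesis .
qed

lemma bind_distr_eq_distr_pair_measure:
  assumes "prob_space P" and "space M \<noteq> {}" and h [measurable]: "h \<in> M \<Otimes>\<^sub>M P \<rightarrow>\<^sub>M N"
  shows "M \<bind> (\<lambda>x. distr P N (\<lambda>z. h (x, z))) = distr (M \<Otimes>\<^sub>M P) N h"
proof -
  interpret P: prob_space P by fact
  define J where "J x = distr P N (\<lambda>z. h (x, z))" for x
  have J_measurable: "J \<in> M \<rightarrow>\<^sub>M subprob_algebra N"
    unfolding J_def
  proof (rule measurable_distr2[where M=P])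
    show "(\<lambda>(x, z). h (x, z)) \<in> M \<Otimes>\<^sub>M P \<rightarrow>\<^sub>M N" by simp
    show "(\<lambda>x. P) \<in> M \<rightarrow>\<^sub>M subprob_algebra P"
      by (auto intro: measurable_const simp: space_subprob_algebra P.subprob_space_axioms)
  qed
  have sets_bind: "sets (M \<bind> J) = sets N"
    by (rule sets_bind) (simp_all add: J_def assms(2))
  show ?thesis
    unfolding J_def[symmetric]
  proof (rule measure_eqI)
    show "sets (M \<bind> J) = sets (distr (M \<Otimes>\<^sub>M P) N h)" by (simp add: sets_bind)
    fix A assume "A \<in> sets (M \<bind> J)"
    then have A [measurable]: "A \<in> sets N" by (simp add: sets_bind)
    define H where "H = h -` A \<inter> space (M \<Otimes>\<^sub>M P)"
    have H: "H \<in> sets (M \<Otimes>\<^sub>M P)" unfolding H_def by measurable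
    have "emeasure (M \<bind> J) A = (\<integral>\<^sup>+x. emeasure (J x) A \<partial>M)"
      by (rule emeasure_bind[OF assms(2) J_measurable A])
    also have "\<dots> = (\<integral>\<^sup>+x. emeasure P (Pair x -` H) \<partial>M)"
    proof (intro nn_integral_cong)
      fix x assume x: "x \<in> space M"
      have "(\<lambda>z. h (x, z)) -` A \<inter> space P = Pair x -` H"
        using x by (auto simp: H_def space_pair_measure)
      moreover have "(\<lambda>z. h (x, z)) \<in> P \<rightarrow>\<^sub>M N"
        using measurable_compose[OF measurable_Pair1'[OF x] h] by simp
      ultimately show "emeasure (J x) A = emeasure P (Pair x -` H)"
        unfolding J_def by (simp add: emeasure_distr)
    qed
    also have "\<dots> = emeasure (M \<Otimes>\<^sub>M P) H"
      by (rule P.emeasure_pair_measure_alt[OF H, symmetric])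
    also have "\<dots> = emeasure (distr (M \<Otimes>\<^sub>M P) N h) A"
      unfolding H_def by (simp add: emeasure_distr)
    finally show "emeasure (M \<bind> J) A = emeasure (distr (M \<Otimes>\<^sub>M P) N h) A" .
  qed
qed

lemma pred_eq_nat [measurable (raw)]:
  fixes a b :: "'a \<Rightarrow> nat"
  assumes "a \<in> M \<rightarrow>\<^sub>M count_space UNIV" and "b \<in> M \<rightarrow>\<^sub>M count_space UNIV"
  shows "Measurable.pred M (\<lambda>\<omega>. a \<omega> = b \<omega>)"
proof -
  have "(\<lambda>\<omega>. (\<lambda>i \<omega>. i = b \<omega>) (a \<omega>) \<omega>) \<in> M \<rightarrow>\<^sub>M count_space UNIV"
    by (rule measurable_compose_countable[OF pred_count_space_const2[OF assms(2)] assms(1)])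
  then show ?thesis by simp
qed

definition code_kernel ::
  "'z measure \<Rightarrow> ('a \<Rightarrow> 'z \<Rightarrow> nat) \<Rightarrow> (nat \<Rightarrow> 'z \<Rightarrow> 'b::topological_space) \<Rightarrow> 'a \<Rightarrow> 'b measure"
  where "code_kernel PZ f g x = distr PZ borel (\<lambda>z. g (f x z) z)"

locale code =
  fixes PZ :: "'z measure" and f :: "'a::topological_space \<Rightarrow> 'z \<Rightarrow> nat"
    and g :: "nat \<Rightarrow> 'z \<Rightarrow> 'b::topological_space"
  assumes prob_space_PZ: "prob_space PZ"
    and encoder_measurable: "(\<lambda>(x, z). f x z) \<in> borel \<Otimes>\<^sub>M PZ \<rightarrow>\<^sub>M count_space UNIV"
    and decoder_measurable: "(\<lambda>(m, z). g m z) \<in> count_space UNIV \<Otimes>\<^sub>M PZ \<rightarrow>\<^sub>M borel"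
begin

sublocale PZ: prob_space PZ by (rule prob_space_PZ)

lemma measurable_encoder [measurable (raw)]:
  assumes "a \<in> M \<rightarrow>\<^sub>M borel" and "b \<in> M \<rightarrow>\<^sub>M PZ"
  shows "(\<lambda>\<omega>. f (a \<omega>) (b \<omega>)) \<in> M \<rightarrow>\<^sub>M count_space UNIV"
  using measurable_compose[OF measurable_Pair[OF assms] encoder_measurable] by simp

lemma measurable_decoder [measurable (raw)]:
  assumes "a \<in> M \<rightarrow>\<^sub>M count_space UNIV" and "b \<in> M \<rightarrow>\<^sub>M PZ"
  shows "(\<lambda>\<omega>. g (a \<omega>) (b \<omega>)) \<in> M \<rightarrow>\<^sub>M borel"
  using measurable_compose[OF measurable_Pair[OF assms] decoder_measurable] by simp

lemma stoch_kernel_code_kernel: "stoch_kernel (code_kernel PZ f g)"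
  unfolding stoch_kernel_def
proof (rule measurable_prob_algebraI)
  show "prob_space (code_kernel PZ f g x)" for x
    unfolding code_kernel_def by (rule PZ.prob_space_distr) measurable
  have "(\<lambda>x. distr PZ borel (\<lambda>z. g (f x z) z)) \<in> borel \<rightarrow>\<^sub>M subprob_algebra borel"
  proof (rule measurable_distr2[where M=PZ])
    show "(\<lambda>(x, z). g (f x z) z) \<in> borel_measurable (borel \<Otimes>\<^sub>M PZ)" by measurable
    show "(\<lambda>x. PZ) \<in> borel \<rightarrow>\<^sub>M subprob_algebra PZ"
      by (auto intro: measurable_const simp: space_subprob_algebra PZ.subprob_space_axioms)
  qed
  then show "code_kernel PZ f g \<in> borel \<rightarrow>\<^sub>M subprob_algebra borel"
    unfolding code_kernel_def .
qed

end

locale code_source = code PZ f g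
  for PZ :: "'z measure" and f :: "'a::topological_space \<Rightarrow> 'z \<Rightarrow> nat"
    and g :: "nat \<Rightarrow> 'z \<Rightarrow> 'b::topological_space" +
  fixes \<mu> :: "'a measure"
  assumes prob_space_\<mu>: "prob_space \<mu>" and sets_\<mu> [measurable_cong]: "sets \<mu> = sets borel"
begin

sublocale \<mu>: prob_space \<mu> by (rule prob_space_\<mu>)
sublocale \<mu>PZ: pair_sigma_finite \<mu> PZ ..

lemma space_\<mu> [simp]: "space \<mu> = UNIV"
  using sets_eq_imp_space_eq[OF sets_\<mu>] by simp

lemma prob_space_\<mu>PZ: "prob_space (\<mu> \<Otimes>\<^sub>M PZ)"
  by (rule prob_space_pair) unfold_locales

definition msg_prob :: "'z \<Rightarrow> nat \<Rightarrow> real" where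
  "msg_prob z m = measure \<mu> {x. f x z = m}"

lemma msg_cell_sets: "z \<in> space PZ \<Longrightarrow> {x. f x z = m} \<in> sets \<mu>"
  by measurable

lemma emeasure_msg_cell: "z \<in> space PZ \<Longrightarrow> emeasure \<mu> {x. f x z = m} = msg_prob z m"
  by (simp add: msg_prob_def \<mu>.emeasure_eq_measure)

lemma measurable_msg_prob [measurable (raw)]:
  assumes "a \<in> M \<rightarrow>\<^sub>M count_space UNIV" and "b \<in> M \<rightarrow>\<^sub>M PZ"
  shows "(\<lambda>\<omega>. msg_prob (b \<omega>) (a \<omega>)) \<in> borel_measurable M"
proof -
  have "(\<lambda>z. msg_prob z m) \<in> borel_measurable PZ" for m
  proof -
    define C where "C = {xz \<in> space (\<mu> \<Otimes>\<^sub>M PZ). f (fst xz) (snd xz) = m}"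
    have "C \<in> sets (\<mu> \<Otimes>\<^sub>M PZ)" unfolding C_def by measurable
    from \<mu>PZ.measurable_emeasure_Pair2[OF this]
    have "(\<lambda>z. enn2real (emeasure \<mu> ((\<lambda>x. (x, z)) -` C))) \<in> borel_measurable PZ"
      by measurable
    then show ?thesis
      by (rule measurable_cong[THEN iffD1, rotated])
        (auto simp: msg_prob_def C_def space_pair_measure measure_def)
  qed
  then show ?thesis
    by (rule measurable_compose_countable[OF _ assms(1), OF measurable_compose[OF assms(2)]])
qed

lemma AE_msg_prob_nonzero: "AE xz in \<mu> \<Otimes>\<^sub>M PZ. msg_prob (snd xz) (f (fst xz) (snd xz)) \<noteq> 0"
proof -
  have "AE x in \<mu>. msg_prob z (f x z) \<noteq> 0" if z: "z \<in> space PZ" for z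
  proof -
    have "(\<Union>m\<in>{m. msg_prob z m = 0}. {x. f x z = m}) \<in> null_sets \<mu>"
      using z by (intro null_sets_UN') (auto simp: null_sets_def msg_cell_sets emeasure_msg_cell)
    then show ?thesis by (rule AE_I') auto
  qed
  then have "AE z in PZ. AE x in \<mu>. msg_prob z (f x z) \<noteq> 0"
    by (rule AE_I2)
  then have "AE x in \<mu>. AE z in PZ. msg_prob z (f x z) \<noteq> 0"
    by (subst \<mu>PZ.AE_commute) measurable
  then show ?thesis
    by (subst (asm) \<mu>PZ.AE_pair_iff) measurable
qed

lemma joint_law_code_kernel: "joint_law \<mu> (code_kernel PZ f g) = code_joint \<mu> PZ f g"
proof -
  have "distr (code_kernel PZ f g x) (borel \<Otimes>\<^sub>M borel) (Pair x)
      = distr PZ (borel \<Otimes>\<^sub>M borel) (\<lambda>z. (x, g (f x z) z))" for x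
    unfolding code_kernel_def by (subst distr_distr) (auto simp: comp_def)
  moreover have "(\<lambda>(x, z). (x, g (f x z) z)) \<in> \<mu> \<Otimes>\<^sub>M PZ \<rightarrow>\<^sub>M borel \<Otimes>\<^sub>M borel"
    by measurable
  note bind_distr_eq_distr_pair_measure[OF prob_space_PZ \<mu>.not_empty this]
  ultimately show ?thesis
    by (simp add: joint_law_def code_joint_def)
qed

text \<open>Under \<open>density triples match_density\<close>, the pair \<open>(x', z)\<close> has law \<open>\<mu> \<otimes> PZ\<close> and \<open>x\<close> is
  drawn from \<open>\<mu>\<close> conditioned on sending the same message as \<open>x'\<close>.\<close>

definition triples :: "('a \<times> ('a \<times> 'z)) measure" where
  "triples = \<mu> \<Otimes>\<^sub>M (\<mu> \<Otimes>\<^sub>M PZ)"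

definition decode_copy :: "'a \<times> ('a \<times> 'z) \<Rightarrow> 'a \<times> 'b" where
  "decode_copy = (\<lambda>(x', (x, z)). (x', g (f x z) z))"

definition match_density :: "'a \<times> ('a \<times> 'z) \<Rightarrow> real" where
  "match_density = (\<lambda>(x', (x, z)). if f x' z = f x z then 1 / msg_prob z (f x z) else 0)"

lemma prob_space_triples: "prob_space triples"
  unfolding triples_def by (rule prob_space_pair[OF prob_space_\<mu> prob_space_\<mu>PZ])

lemma measurable_decode_copy [measurable]: "decode_copy \<in> triples \<rightarrow>\<^sub>M borel \<Otimes>\<^sub>M borel"
  unfolding decode_copy_def triples_def by measurable

lemma measurable_match_density [measurable]: "match_density \<in> borel_measurable triples"
  unfolding match_density_def triples_def by measurable

lemma match_density_nonneg: "0 \<le> match_density \<omega>"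
  by (auto simp: match_density_def msg_prob_def split: prod.splits)

lemma nn_integral_triples:
  assumes [measurable]: "F \<in> borel_measurable triples"
  shows "(\<integral>\<^sup>+\<omega>. F \<omega> \<partial>triples) = (\<integral>\<^sup>+x'. \<integral>\<^sup>+z. \<integral>\<^sup>+x. F (x', (x, z)) \<partial>\<mu> \<partial>PZ \<partial>\<mu>)"
proof -
  have "sigma_finite_measure (\<mu> \<Otimes>\<^sub>M PZ)"
    by (rule prob_space_imp_sigma_finite[OF prob_space_\<mu>PZ])
  then have "(\<integral>\<^sup>+\<omega>. F \<omega> \<partial>triples) = (\<integral>\<^sup>+x'. \<integral>\<^sup>+xz. F (x', xz) \<partial>(\<mu> \<Otimes>\<^sub>M PZ) \<partial>\<mu>)"
    unfolding triples_def
    by (rule sigma_finite_measure.nn_integral_fst[symmetric]) (simp add: triples_def[symmetric])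
  also have "\<dots> = (\<integral>\<^sup>+x'. \<integral>\<^sup>+z. \<integral>\<^sup>+x. F (x', (x, z)) \<partial>\<mu> \<partial>PZ \<partial>\<mu>)"
  proof (intro nn_integral_cong)
    fix x'
    have "(\<lambda>xz. F (x', xz)) \<in> borel_measurable (\<mu> \<Otimes>\<^sub>M PZ)"
      using measurable_compose[OF measurable_Pair1'[of x' \<mu> "\<mu> \<Otimes>\<^sub>M PZ"]] assms
      unfolding triples_def by simp
    then show "(\<integral>\<^sup>+xz. F (x', xz) \<partial>(\<mu> \<Otimes>\<^sub>M PZ)) = (\<integral>\<^sup>+z. \<integral>\<^sup>+x. F (x', (x, z)) \<partial>\<mu> \<partial>PZ)"
      by (simp add: \<mu>PZ.nn_integral_snd[symmetric])
  qed
  finally show ?thesis .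
qed

lemma distr_triples_decode_copy:
  "distr triples (borel \<Otimes>\<^sub>M borel) decode_copy = \<mu> \<Otimes>\<^sub>M distr (code_joint \<mu> PZ f g) borel snd"
proof -
  define \<nu> where "\<nu> = distr (\<mu> \<Otimes>\<^sub>M PZ) borel (\<lambda>(x, z). g (f x z) z)"
  have "distr (code_joint \<mu> PZ f g) borel snd = \<nu>"
    unfolding code_joint_def \<nu>_def by (subst distr_distr) (auto simp: comp_def split_beta')
  moreover have "sigma_finite_measure \<nu>"
    unfolding \<nu>_def
    by (intro prob_space_imp_sigma_finite prob_space.prob_space_distr[OF prob_space_\<mu>PZ]) measurable
  then have "distr \<mu> borel (\<lambda>x. x) \<Otimes>\<^sub>M \<nu> = distr triples (borel \<Otimes>\<^sub>M borel) decode_copy"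
    unfolding triples_def \<nu>_def decode_copy_def
    by (subst pair_measure_distr) (simp_all add: split_beta')
  moreover have "distr \<mu> borel (\<lambda>x. x) = \<mu>"
    by (rule distr_id2) (simp add: sets_\<mu>)
  ultimately show ?thesis by simp
qed

lemma nn_integral_match_density_indicator:
  assumes z: "z \<in> space PZ"
  shows "(\<integral>\<^sup>+x. ennreal (match_density (x', (x, z))) * indicator A (decode_copy (x', (x, z))) \<partial>\<mu>)
    = indicator A (x', g (f x' z) z) * (if msg_prob z (f x' z) = 0 then 0 else 1)"
proof -
  have "(\<integral>\<^sup>+x. ennreal (match_density (x', (x, z))) * indicator A (decode_copy (x', (x, z))) \<partial>\<mu>)
      = (\<integral>\<^sup>+x. (indicator A (x', g (f x' z) z) * ennreal (1 / msg_prob z (f x' z)))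
          * indicator {x. f x z = f x' z} x \<partial>\<mu>)"
    by (intro nn_integral_cong) (auto simp: match_density_def decode_copy_def indicator_def)
  also have "\<dots> = indicator A (x', g (f x' z) z) * ennreal (1 / msg_prob z (f x' z))
      * ennreal (msg_prob z (f x' z))"
    using z by (simp add: nn_integral_cmult_indicator msg_cell_sets emeasure_msg_cell)
  also have "\<dots> = indicator A (x', g (f x' z) z) * (if msg_prob z (f x' z) = 0 then 0 else 1)"
    by (simp add: mult.assoc ennreal_mult''[symmetric] msg_prob_def)
  finally show ?thesis .
qed

lemma distr_density_match_density:
  "distr (density triples match_density) (borel \<Otimes>\<^sub>M borel) decode_copy = code_joint \<mu> PZ f g"
proof (rule measure_eqI)
  show "sets (distr (density triples match_density) (borel \<Otimes>\<^sub>M borel) decode_copy)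
      = sets (code_joint \<mu> PZ f g)"
    by (simp add: code_joint_def)
  fix A assume "A \<in> sets (distr (density triples match_density) (borel \<Otimes>\<^sub>M borel) decode_copy)"
  then have A [measurable]: "A \<in> sets (borel \<Otimes>\<^sub>M borel)" by simp
  define e where "e xz = (if msg_prob (snd xz) (f (fst xz) (snd xz)) = 0 then 0 else 1 :: ennreal)" for xz
  have "emeasure (distr (density triples match_density) (borel \<Otimes>\<^sub>M borel) decode_copy) A
      = (\<integral>\<^sup>+\<omega>. ennreal (match_density \<omega>) * indicator A (decode_copy \<omega>) \<partial>triples)"
    by (simp add: emeasure_distr emeasure_density nn_integral_indicator[symmetric]
        nn_integral_density nn_integral_distr del: nn_integral_indicator)
  also have "\<dots> = (\<integral>\<^sup>+x'. \<integral>\<^sup>+z. \<integral>\<^sup>+x. ennreal (match_density (x', (x, z))) * indicator A (decode_copy (x', (x, z)))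
      \<partial>\<mu> \<partial>PZ \<partial>\<mu>)"
    by (rule nn_integral_triples) measurable
  also have "\<dots> = (\<integral>\<^sup>+x'. \<integral>\<^sup>+z. indicator A (x', g (f x' z) z) * e (x', z) \<partial>PZ \<partial>\<mu>)"
    by (intro nn_integral_cong) (simp add: nn_integral_match_density_indicator e_def)
  also have "\<dots> = (\<integral>\<^sup>+xz. indicator A (fst xz, g (f (fst xz) (snd xz)) (snd xz)) * e xz \<partial>(\<mu> \<Otimes>\<^sub>M PZ))"
  proof -
    have "(\<lambda>xz. indicator A (fst xz, g (f (fst xz) (snd xz)) (snd xz)) * e xz)
        \<in> borel_measurable (\<mu> \<Otimes>\<^sub>M PZ)"
      unfolding e_def by measurable
    from PZ.nn_integral_fst[OF this] show ?thesis by simp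
  qed
  also have "\<dots> = (\<integral>\<^sup>+xz. indicator A (fst xz, g (f (fst xz) (snd xz)) (snd xz)) \<partial>(\<mu> \<Otimes>\<^sub>M PZ))"
    using AE_msg_prob_nonzero by (intro nn_integral_cong_AE) (auto simp: e_def)
  also have "\<dots> = (\<integral>\<^sup>+y. indicator A y \<partial>code_joint \<mu> PZ f g)"
    unfolding code_joint_def by (subst nn_integral_distr) (auto simp: split_beta')
  also have "\<dots> = emeasure (code_joint \<mu> PZ f g) A"
    by (simp add: code_joint_def)
  finally show "emeasure (distr (density triples match_density) (borel \<Otimes>\<^sub>M borel) decode_copy) A
      = emeasure (code_joint \<mu> PZ f g) A" .
qed

lemma nn_integral_kl_phi_msg_cell:
  assumes z: "z \<in> space PZ" and p: "0 < msg_prob z m"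
  shows "(\<integral>\<^sup>+x. kl_phi (if f x z = m then 1 / msg_prob z m else 0) \<partial>\<mu>) = - ln (msg_prob z m)"
proof -
  define C where "C = {x. f x z = m}"
  have C: "C \<in> sets \<mu>" unfolding C_def using z by (rule msg_cell_sets)
  have compl: "emeasure \<mu> (space \<mu> - C) = 1 - msg_prob z m"
    using \<mu>.prob_compl[OF C] C by (simp add: \<mu>.emeasure_eq_measure C_def msg_prob_def)
  have "(\<integral>\<^sup>+x. kl_phi (if f x z = m then 1 / msg_prob z m else 0) \<partial>\<mu>)
      = (\<integral>\<^sup>+x. ennreal (kl_phi (1 / msg_prob z m)) * indicator C x + indicator (space \<mu> - C) x \<partial>\<mu>)"
    by (intro nn_integral_cong) (auto simp: C_def indicator_def kl_phi_def)
  also have "\<dots> = ennreal (kl_phi (1 / msg_prob z m)) * msg_prob z m + (1 - msg_prob z m)"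
    using C compl emeasure_msg_cell[OF z] by (simp add: C_def nn_integral_add nn_integral_cmult_indicator)
  also have "\<dots> = ennreal (msg_prob z m * kl_phi (1 / msg_prob z m) + (1 - msg_prob z m))"
    using p kl_phi_nonneg[of "1 / msg_prob z m"] by (simp add: ennreal_mult ennreal_plus mult.commute msg_prob_def)
  also have "\<dots> = - ln (msg_prob z m)"
    using p by (simp add: kl_phi_inverse)
  finally show ?thesis .
qed

lemma nn_integral_kl_phi_match_density_section:
  assumes z: "z \<in> space PZ"
  shows "(\<integral>\<^sup>+x'. \<integral>\<^sup>+x. kl_phi (match_density (x', (x, z))) \<partial>\<mu> \<partial>\<mu>)
    = disc_entropy (distr \<mu> (count_space UNIV) (\<lambda>x. f x z))"
proof -
  have f_z: "(\<lambda>x. f x z) \<in> \<mu> \<rightarrow>\<^sub>M count_space UNIV" using z by measurable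
  define J where "J m = (\<integral>\<^sup>+x. kl_phi (if f x z = m then 1 / msg_prob z m else 0) \<partial>\<mu>)" for m
  have "(\<integral>\<^sup>+x'. \<integral>\<^sup>+x. kl_phi (match_density (x', (x, z))) \<partial>\<mu> \<partial>\<mu>) = (\<integral>\<^sup>+x'. J (f x' z) \<partial>\<mu>)"
    by (auto simp: J_def match_density_def intro!: nn_integral_cong)
  also have "\<dots> = (\<Sum>m. J m * emeasure \<mu> {x. f x z = m})"
    using nn_integral_nat_valued[OF f_z] by (simp add: vimage_def)
  also have "\<dots> = (\<Sum>m. ennreal (- msg_prob z m * ln (msg_prob z m)))"
  proof (intro suminf_cong)
    fix m
    show "J m * emeasure \<mu> {x. f x z = m} = ennreal (- msg_prob z m * ln (msg_prob z m))"
    proof (cases "msg_prob z m = 0")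
      case True
      then show ?thesis using emeasure_msg_cell[OF z] by simp
    next
      case False
      then have p: "0 < msg_prob z m" by (simp add: msg_prob_def order_less_le)
      have "0 \<le> - ln (msg_prob z m)" using p by (simp add: msg_prob_def)
      then show ?thesis
        using p emeasure_msg_cell[OF z] nn_integral_kl_phi_msg_cell[OF z p]
        by (simp add: J_def ennreal_mult[symmetric] mult.commute)
    qed
  qed
  also have "\<dots> = disc_entropy (distr \<mu> (count_space UNIV) (\<lambda>x. f x z))"
    using f_z by (simp add: disc_entropy_def measure_distr msg_prob_def vimage_def)
  finally show ?thesis .
qed

lemma nn_integral_kl_phi_match_density:
  "(\<integral>\<^sup>+\<omega>. kl_phi (match_density \<omega>) \<partial>triples) = cond_entropy_code \<mu> PZ f"
proof -
  have "(\<integral>\<^sup>+\<omega>. kl_phi (match_density \<omega>) \<partial>triples)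
      = (\<integral>\<^sup>+x'. \<integral>\<^sup>+z. \<integral>\<^sup>+x. kl_phi (match_density (x', (x, z))) \<partial>\<mu> \<partial>PZ \<partial>\<mu>)"
    by (rule nn_integral_triples) measurable
  also have "\<dots> = (\<integral>\<^sup>+z. \<integral>\<^sup>+x'. \<integral>\<^sup>+x. kl_phi (match_density (x', (x, z))) \<partial>\<mu> \<partial>\<mu> \<partial>PZ)"
  proof (rule \<mu>PZ.Fubini'[symmetric])
    have "(\<lambda>(x'z, x). (fst x'z, (x, snd x'z))) \<in> (\<mu> \<Otimes>\<^sub>M PZ) \<Otimes>\<^sub>M \<mu> \<rightarrow>\<^sub>M triples"
      unfolding triples_def by measurable
    from measurable_compose[OF this, of "\<lambda>\<omega>. ennreal (kl_phi (match_density \<omega>))"]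
    have "(\<lambda>(x'z, x). ennreal (kl_phi (match_density (fst x'z, (x, snd x'z)))))
        \<in> borel_measurable ((\<mu> \<Otimes>\<^sub>M PZ) \<Otimes>\<^sub>M \<mu>)"
      by (simp add: split_beta')
    from \<mu>.borel_measurable_nn_integral[OF this]
    show "(\<lambda>(x', z). \<integral>\<^sup>+x. kl_phi (match_density (x', (x, z))) \<partial>\<mu>) \<in> borel_measurable (\<mu> \<Otimes>\<^sub>M PZ)"
      by (simp add: split_beta')
  qed
  also have "\<dots> = cond_entropy_code \<mu> PZ f"
    unfolding cond_entropy_code_def
    by (intro nn_integral_cong nn_integral_kl_phi_match_density_section)
  finally show ?thesis .
qed

theorem mutual_info_code_kernel_le:
  "mutual_info \<mu> (code_kernel PZ f g) \<le> enn2ereal (cond_entropy_code \<mu> PZ f)"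
proof -
  interpret joint: prob_space "code_joint \<mu> PZ f g"
    unfolding code_joint_def by (rule prob_space.prob_space_distr[OF prob_space_\<mu>PZ]) measurable
  have "decode_copy -` space (borel \<Otimes>\<^sub>M borel) \<inter> space triples = space triples"
    using measurable_space[OF measurable_decode_copy] by auto
  then have "(\<integral>\<^sup>+\<omega>. match_density \<omega> \<partial>triples) = emeasure (code_joint \<mu> PZ f g) (space (borel \<Otimes>\<^sub>M borel))"
    by (simp add: distr_density_match_density[symmetric] emeasure_distr emeasure_density)
  then have finite: "(\<integral>\<^sup>+\<omega>. match_density \<omega> \<partial>triples) \<noteq> \<infinity>"
    using joint.emeasure_space_1 by (simp add: code_joint_def)
  have "mutual_info \<mu> (code_kernel PZ f g)
      = KL_div (distr (density triples match_density) (borel \<Otimes>\<^sub>M borel) decode_copy)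
          (distr triples (borel \<Otimes>\<^sub>M borel) decode_copy)"
    by (simp add: mutual_info_def joint_law_code_kernel distr_density_match_density
        distr_triples_decode_copy)
  also have "\<dots> \<le> enn2ereal (\<integral>\<^sup>+\<omega>. kl_phi (match_density \<omega>) \<partial>triples)"
    using prob_space_triples measurable_decode_copy measurable_match_density match_density_nonneg finite
    by (rule KL_div_distr_density_le)
  finally show ?thesis by (simp add: nn_integral_kl_phi_match_density)
qed

end

theorem theorem4:
  fixes S :: "'a::polish_space measure set"
    and M :: nat
    and h :: "nat \<Rightarrow> ('a \<times> 'b::polish_space) measure \<Rightarrow> real"
    and \<theta> :: "nat \<Rightarrow> real"
    and R :: real
    and PZ :: "'z measure"
    and f :: "'a \<Rightarrow> 'z \<Rightarrow> nat"
    and g :: "nat \<Rightarrow> 'z \<Rightarrow> 'b"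
  assumes "finite S"
    and "\<forall>\<mu>\<in>S. prob_on \<mu>"
    and "robust_achievable_via S M h \<theta> R PZ f g"
  shows "robust_rate S M h \<theta> \<le> ereal R"
proof -
  from assms(3) have code: "code PZ f g"
    and rate: "\<forall>\<mu>\<in>S. enn2ereal (cond_entropy_code \<mu> PZ f) \<le> ereal R"
    and distortion: "\<forall>\<mu>\<in>S. \<forall>i<M. h i (code_joint \<mu> PZ f g) \<le> \<theta> i"
    unfolding robust_achievable_via_def code_def by auto
  have source: "code_source PZ f g \<mu>" if "\<mu> \<in> S" for \<mu>
    using code assms(2) that by (simp add: code_source_def code_source_axioms_def prob_on_def)
  have "code_kernel PZ f g \<in> constr_set S M h \<theta>"
    using distortion code_source.joint_law_code_kernel[OF source] code.stoch_kernel_code_kernel[OF code]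
    by (simp add: constr_set_def)
  then have "robust_rate S M h \<theta> \<le> (SUP \<mu>\<in>S. mutual_info \<mu> (code_kernel PZ f g))"
    unfolding robust_rate_def by (rule INF_lower)
  also have "\<dots> \<le> ereal R"
  proof (rule SUP_least)
    fix \<mu> assume "\<mu> \<in> S"
    then show "mutual_info \<mu> (code_kernel PZ f g) \<le> ereal R"
      using rate code_source.mutual_info_code_kernel_le[OF source] by (meson order_trans)
  qed
  finally show ?thesis .
qed

end
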